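(* The symmetric non-reciprocal cataclysmic quarrel rule is supremely non-monotonic: for every integer $k\ge0$ there exist $n\ge3$, distinct players $i,j\in[n]$ and a monotonic game $\mathcal W$ on $[n]$ such that the game $\hat{\mathcal W}$ obtained by imposing a symmetric non-reciprocal cataclysmic quarrel of $i$ against $j$ is not $k$-monotonic.
   Context: Players are $[n]=\{1,\dots,n\}$. A binary voting game on $[n]$ is identified with its collection $\mathcal W\subseteq 2^{[n]}$ of winning sets ($S\in\mathcal W$ means the division in which exactly the members of $S$ vote YES has outcome YES). It is monotonic if $T\subseteq S$ and $T\in\mathcal W$ imply $S\in\mathcal W$. For an integer $k\ge0$, a game $\mathcal W$ is $k$-monotonic if for every $S\subseteq[n]$ with $S\notin\mathcal W$ and every proper subset $T\subsetneq S$ there exists $K$ with $|K|\le k$ such that $T\setminus K\notin\mathcal W$. Symmetric non-reciprocal cataclysmic quarrel of $i$ against $j$: for every $S\subseteq[n]\setminus\{i,j\}$, $S\cup\{i,j\}\in\hat{\mathcal W}\iff \{j\}\in\mathcal W$; $S\in\hat{\mathcal W}\iff [n]\setminus\{j\}\in\mathcal W$; $S\cup\{i\}\in\hat{\mathcal W}\iff S\cup\{i\}\in\mathcal W$; $S\cup\{j\}\in\hat{\mathcal W}\iff S\cup\{j\}\in\mathcal W$. *)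

theory Defs
  imports Main
begin

definition game :: "nat \<Rightarrow> nat set set \<Rightarrow> bool" where
  "game n W \<longleftrightarrow> W \<subseteq> Pow {1..n}"

definition monotonic :: "nat \<Rightarrow> nat set set \<Rightarrow> bool" where
  "monotonic n W \<longleftrightarrow>
     (\<forall>S T. S \<subseteq> {1..n} \<longrightarrow> T \<subseteq> S \<longrightarrow> T \<in> W \<longrightarrow> S \<in> W)"

definition k_monotonic :: "nat \<Rightarrow> nat \<Rightarrow> nat set set \<Rightarrow> bool" where
  "k_monotonic k n W \<longleftrightarrow>
     (\<forall>S T. S \<subseteq> {1..n} \<longrightarrow> S \<notin> W \<longrightarrow> T \<subset> S \<longrightarrow>
        (\<exists>K. finite K \<and> card K \<le> k \<and> T - K \<notin> W))"

definition quarrel :: "nat \<Rightarrow> nat \<Rightarrow> nat \<Rightarrow> nat set set \<Rightarrow> nat set set" where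
  "quarrel n i j W = {S. S \<subseteq> {1..n} \<and>
     (if i \<in> S \<and> j \<in> S then {j} \<in> W
      else if i \<notin> S \<and> j \<notin> S then {1..n} - {j} \<in> W
      else S \<in> W)}"

end

theory Submission
  imports Defs
begin

text \<open>Take the threshold game in which every coalition of at least two players wins. After
  the quarrel of \<open>i\<close> against \<open>j\<close> the grand coalition loses, because \<open>{j}\<close> lost before.
  Its subcoalition \<open>[n] - {i}\<close>, however, keeps winning after any \<open>k\<close> players are removed,
  as long as at least two players remain: coalitions without \<open>i\<close> keep their outcome if they
  contain \<open>j\<close>, and otherwise inherit the winning outcome of \<open>[n] - {j}\<close>. So with
  \<open>n \<ge> k + 3\<close> players \<open>k\<close>-monotonicity fails.\<close>

definition at_least :: "nat \<Rightarrow> nat \<Rightarrow> nat set set" where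
  "at_least m n = {A. A \<subseteq> {1..n} \<and> m \<le> card A}"

lemma game_at_least: "game n (at_least m n)"
  unfolding game_def at_least_def by auto

lemma monotonic_at_least: "monotonic n (at_least m n)"
  unfolding monotonic_def
proof (intro allI impI)
  fix S T :: "nat set"
  assume "S \<subseteq> {1..n}" "T \<subseteq> S" "T \<in> at_least m n"
  moreover have "card T \<le> card S"
    using \<open>S \<subseteq> {1..n}\<close> \<open>T \<subseteq> S\<close> by (meson card_mono finite_atLeastAtMost finite_subset)
  ultimately show "S \<in> at_least m n"
    unfolding at_least_def by simp
qed

lemma in_quarrel_if_not_in:
  assumes "i \<notin> S"
  shows "S \<in> quarrel n i j W \<longleftrightarrow>
    S \<subseteq> {1..n} \<and> (if j \<in> S then S \<in> W else {1..n} - {j} \<in> W)"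
  using assms unfolding quarrel_def by simp

lemma grand_coalition_not_in_quarrel_at_least:
  assumes "i \<in> {1..n}" "j \<in> {1..n}"
  shows "{1..n} \<notin> quarrel n i j (at_least 2 n)"
  using assms unfolding quarrel_def at_least_def by simp

lemma in_quarrel_at_least_if_not_in:
  assumes "S \<subseteq> {1..n}" "i \<notin> S" "2 \<le> card S" "j \<in> {1..n}" "3 \<le> n"
  shows "S \<in> quarrel n i j (at_least 2 n)"
proof -
  have "card ({1..n} - {j}) = n - 1"
    using assms(4) by simp
  then have "{1..n} - {j} \<in> at_least 2 n"
    using assms(5) unfolding at_least_def by auto
  moreover have "S \<in> at_least 2 n"
    using assms(1,3) unfolding at_least_def by simp
  ultimately show ?thesis
    using assms(1,2) by (simp add: in_quarrel_if_not_in)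
qed

lemma not_k_monotonic_quarrel_at_least:
  assumes "k + 3 \<le> n" "i \<in> {1..n}" "j \<in> {1..n}"
  shows "\<not> k_monotonic k n (quarrel n i j (at_least 2 n))"
proof
  assume "k_monotonic k n (quarrel n i j (at_least 2 n))"
  moreover have "{1..n} - {i} \<subset> {1..n}"
    using assms(2) by blast
  ultimately obtain K where K: "finite K" "card K \<le> k"
    and lost: "{1..n} - {i} - K \<notin> quarrel n i j (at_least 2 n)"
    using grand_coalition_not_in_quarrel_at_least[OF assms(2,3)]
    unfolding k_monotonic_def by (meson order_refl)
  have "card ({1..n} - {i}) - card K \<le> card ({1..n} - {i} - K)"
    using diff_card_le_card_Diff[OF K(1)] .
  moreover have "card ({1..n} - {i}) = n - 1"
    using assms(2) by simp
  ultimately have "2 \<le> card ({1..n} - {i} - K)"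
    using K(2) assms(1) by linarith
  then have "{1..n} - {i} - K \<in> quarrel n i j (at_least 2 n)"
    by (rule in_quarrel_at_least_if_not_in[rotated 2]) (use assms in auto)
  with lost show False ..
qed

theorem theorem13:
  shows "\<forall>k::nat. \<exists>n i j W. n \<ge> 3 \<and> i \<in> {1..n} \<and> j \<in> {1..n} \<and> i \<noteq> j \<and>
           game n W \<and> monotonic n W \<and> \<not> k_monotonic k n (quarrel n i j W)"
proof
  fix k :: nat
  have "\<not> k_monotonic k (k + 3) (quarrel (k + 3) 1 2 (at_least 2 (k + 3)))"
    by (rule not_k_monotonic_quarrel_at_least) auto
  with game_at_least monotonic_at_least
  show "\<exists>n i j W. n \<ge> 3 \<and> i \<in> {1..n} \<and> j \<in> {1..n} \<and> i \<noteq> j \<and>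
           game n W \<and> monotonic n W \<and> \<not> k_monotonic k n (quarrel n i j W)"
    by (intro exI[of _ "k + 3"] exI[of _ 1] exI[of _ 2] exI[of _ "at_least 2 (k + 3)"]) auto
qed

end
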